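(* Let $\bowtie\in\{\preceq,\succeq\}$, $\mathcal{T}\in\{\mathrm{dwp},\mathrm{awp}\}$, $C\in\mathsf{pGCL}$ and $f\in\mathbb{E}$. Then $\mathrm{trans}^{\bowtie}_{\mathcal{T}}[\![C]\!](f)\multimap C$.
   Context: States: fix a countably infinite set of program variables with values in $\mathbb{Q}_{\ge 0}$; a state is a map $\sigma$ from variables to $\mathbb{Q}_{\ge0}$ which is $0$ for all but finitely many variables; $\mathsf{States}$ is the set of states. A predicate is a map $\varphi:\mathsf{States}\to\{\mathsf{true},\mathsf{false}\}$; $\varphi\models\psi$ means every state satisfying $\varphi$ satisfies $\psi$; $\models\varphi$ means $\varphi$ holds in every state; $\varphi\Rightarrow\psi$ is the usual implication of predicates. Expectations: $\mathbb{E}$ is the set of maps $\mathsf{States}\to[0,\infty]$, ordered pointwise; $+,\cdot$ pointwise with $0\cdot\infty=0$; $\sqcap,\sqcup$ pointwise min/max; $[\varphi]$ Iverson bracket; $(\varphi\to g)(\sigma)=g(\sigma)$ if $\sigma\models\varphi$, else $\infty$; $f[x/E](\sigma)=f(\sigma[x\mapsto E(\sigma)])$. Programs of $\mathsf{pGCL}$: $C ::= \mathtt{skip} \mid x:=E \mid C;C \mid \mathtt{if}\ \varphi_1\to C\ \square\ \varphi_2\to C \mid \{C\}[p]\{C\} \mid \mathtt{while}(\varphi)\{C\}[I]$, where $E:\mathsf{States}\to\mathbb{Q}_{\ge0}$, $p:\mathsf{States}\to[0,1]$, in every guarded choice $\varphi_1\vee\varphi_2$ is valid, and every loop carries an invariant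 annotation $I\in\mathbb{E}$. Weakest preexpectations for $\mathcal{T}\in\{\mathrm{dwp},\mathrm{awp}\}$: $\mathcal{T}[\![\mathtt{skip}]\!](f)=f$; $\mathcal{T}[\![x:=E]\!](f)=f[x/E]$; $\mathcal{T}[\![C_1;C_2]\!](f)=\mathcal{T}[\![C_1]\!](\mathcal{T}[\![C_2]\!](f))$; $\mathrm{dwp}$ of a guarded choice is $(\varphi_1\to\mathrm{dwp}[\![C_1]\!](f))\sqcap(\varphi_2\to\mathrm{dwp}[\![C_2]\!](f))$; $\mathrm{awp}$ of a guarded choice is $[\varphi_1]\cdot\mathrm{awp}[\![C_1]\!](f)\sqcup[\varphi_2]\cdot\mathrm{awp}[\![C_2]\!](f)$; $\mathcal{T}[\![\{C_1\}[p]\{C_2\}]\!](f)=p\cdot\mathcal{T}[\![C_1]\!](f)+(1-p)\cdot\mathcal{T}[\![C_2]\!](f)$; for loops the least fixpoint of $g\mapsto[\neg\varphi]\cdot f+[\varphi]\cdot\mathcal{T}[\![C']\!](g)$. The auxiliary transformer $\mathcal{T}^*$ ($\mathrm{dwp}^*$, $\mathrm{awp}^*$) is defined by the same rules except that $\mathcal{T}^*[\![\mathtt{while}(\varphi)\{C'\}[I]]\!](f)=I$. Implementation relation $\multimap$: the smallest partial order on $\mathsf{pGCL}$ closed under: if $C_1'\multimap C_1$, $C_2'\multimap C_2$ then $C_1';C_2'\multimap C_1;C_2$ and $\{C_1'\}[p]\{C_2'\}\multimap\{C_1\}[p]\{C_2\}$; if moreover $\varphi_1'\models\varphi_1$, $\varphi_2'\models\varphi_2$,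 $\models\varphi_1'\vee\varphi_2'$ then $\mathtt{if}\ \varphi_1'\to C_1'\ \square\ \varphi_2'\to C_2'\multimap\mathtt{if}\ \varphi_1\to C_1\ \square\ \varphi_2\to C_2$; if $C'\multimap C$ then $\mathtt{while}(\varphi)\{C'\}\multimap\mathtt{while}(\varphi)\{C\}$. Comparison predicates: for $f,g\in\mathbb{E}$, $f\preceq g$ is the predicate true at $\sigma$ iff $f(\sigma)\le g(\sigma)$, and $f\succeq g$ is true at $\sigma$ iff $f(\sigma)\ge g(\sigma)$. Program transformer $\mathrm{trans}^{\bowtie}_{\mathcal{T}}:\mathsf{pGCL}\times\mathbb{E}\to\mathsf{pGCL}$, by induction: $\mathtt{skip}\mapsto\mathtt{skip}$; $x:=E\mapsto x:=E$; $C_1;C_2\mapsto \mathrm{trans}^{\bowtie}_{\mathcal{T}}[\![C_1]\!](\mathcal{T}^*[\![C_2]\!](f));\mathrm{trans}^{\bowtie}_{\mathcal{T}}[\![C_2]\!](f)$; $\mathtt{if}\ \varphi_1\to C_1\ \square\ \varphi_2\to C_2\mapsto \mathtt{if}\ \psi_1\to\mathrm{trans}^{\bowtie}_{\mathcal{T}}[\![C_1]\!](f)\ \square\ \psi_2\to\mathrm{trans}^{\bowtie}_{\mathcal{T}}[\![C_2]\!](f)$ with $\psi_1=\varphi_1\wedge(\varphi_2\Rightarrow \mathcal{T}^*[\![C_1]\!](f)\bowtie\mathcal{T}^*[\![C_2]\!](f))$ and $\psi_2=\varphi_2\wedge(\varphi_1\Rightarrow \mathcal{T}^*[\![C_2]\!](f)\bowtie\mathcal{T}^*[\![C_1]\!](f))$;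 $\{C_1\}[p]\{C_2\}\mapsto\{\mathrm{trans}^{\bowtie}_{\mathcal{T}}[\![C_1]\!](f)\}[p]\{\mathrm{trans}^{\bowtie}_{\mathcal{T}}[\![C_2]\!](f)\}$; $\mathtt{while}(\varphi)\{C'\}[I]\mapsto\mathtt{while}(\varphi)\{\mathrm{trans}^{\bowtie}_{\mathcal{T}}[\![C']\!](I)\}[I]$. *)

theory Defs
  imports Main "HOL-Library.Extended_Nonnegative_Real"
begin

typedef qnn = "{q :: rat. 0 \<le> q}"
  by (rule exI[of _ 0]) simp

instantiation qnn :: zero
begin
definition zero_qnn :: qnn where "zero_qnn = Abs_qnn 0"
instance ..
end

type_synonym var = nat

typedef state = "{\<sigma> :: var \<Rightarrow> qnn. finite {x. \<sigma> x \<noteq> 0}}"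
  by (rule exI[of _ "\<lambda>_. 0"]) simp

definition upd :: "state \<Rightarrow> var \<Rightarrow> qnn \<Rightarrow> state" where
  "upd \<sigma> x v = Abs_state ((Rep_state \<sigma>)(x := v))"

type_synonym pred = "state \<Rightarrow> bool"
type_synonym expect = "state \<Rightarrow> ennreal"

definition valid :: "pred \<Rightarrow> bool" where
  "valid \<phi> \<longleftrightarrow> (\<forall>\<sigma>. \<phi> \<sigma>)"

definition entails :: "pred \<Rightarrow> pred \<Rightarrow> bool" where
  "entails \<phi> \<psi> \<longleftrightarrow> (\<forall>\<sigma>. \<phi> \<sigma> \<longrightarrow> \<psi> \<sigma>)"

definition iverson :: "pred \<Rightarrow> expect" where
  "iverson \<phi> = (\<lambda>\<sigma>. if \<phi> \<sigma> then 1 else 0)"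

definition guard_to :: "pred \<Rightarrow> expect \<Rightarrow> expect" where
  "guard_to \<phi> g = (\<lambda>\<sigma>. if \<phi> \<sigma> then g \<sigma> else \<infinity>)"

definition subst :: "expect \<Rightarrow> var \<Rightarrow> (state \<Rightarrow> qnn) \<Rightarrow> expect" where
  "subst f x E = (\<lambda>\<sigma>. f (upd \<sigma> x (E \<sigma>)))"

datatype pgcl =
    Skip
  | Assign var "state \<Rightarrow> qnn"
  | Seq pgcl pgcl
  | GChoice pred pgcl pred pgcl
  | PChoice pgcl "state \<Rightarrow> real" pgcl
  | While pred pgcl expect

fun wf_pgcl :: "pgcl \<Rightarrow> bool" where
  "wf_pgcl Skip = True"
| "wf_pgcl (Assign x E) = True"
| "wf_pgcl (Seq C1 C2) = (wf_pgcl C1 \<and> wf_pgcl C2)"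
| "wf_pgcl (GChoice \<phi>1 C1 \<phi>2 C2) =
     (valid (\<lambda>\<sigma>. \<phi>1 \<sigma> \<or> \<phi>2 \<sigma>) \<and> wf_pgcl C1 \<and> wf_pgcl C2)"
| "wf_pgcl (PChoice C1 p C2) =
     ((\<forall>\<sigma>. 0 \<le> p \<sigma> \<and> p \<sigma> \<le> 1) \<and> wf_pgcl C1 \<and> wf_pgcl C2)"
| "wf_pgcl (While \<phi> C I) = wf_pgcl C"

datatype transformer = Dwp | Awp

fun tstar :: "transformer \<Rightarrow> pgcl \<Rightarrow> expect \<Rightarrow> expect" where
  "tstar T Skip f = f"
| "tstar T (Assign x E) f = subst f x E"
| "tstar T (Seq C1 C2) f = tstar T C1 (tstar T C2 f)"
| "tstar Dwp (GChoice \<phi>1 C1 \<phi>2 C2) f =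
     (\<lambda>\<sigma>. min (guard_to \<phi>1 (tstar Dwp C1 f) \<sigma>) (guard_to \<phi>2 (tstar Dwp C2 f) \<sigma>))"
| "tstar Awp (GChoice \<phi>1 C1 \<phi>2 C2) f =
     (\<lambda>\<sigma>. max (iverson \<phi>1 \<sigma> * tstar Awp C1 f \<sigma>) (iverson \<phi>2 \<sigma> * tstar Awp C2 f \<sigma>))"
| "tstar T (PChoice C1 p C2) f =
     (\<lambda>\<sigma>. ennreal (p \<sigma>) * tstar T C1 f \<sigma> + ennreal (1 - p \<sigma>) * tstar T C2 f \<sigma>)"
| "tstar T (While \<phi> C I) f = I"

datatype cmp = Preceq | Succeq

fun cmp_pred :: "cmp \<Rightarrow> expect \<Rightarrow> expect \<Rightarrow> pred" where
  "cmp_pred Preceq f g = (\<lambda>\<sigma>. f \<sigma> \<le> g \<sigma>)"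
| "cmp_pred Succeq f g = (\<lambda>\<sigma>. f \<sigma> \<ge> g \<sigma>)"

fun transp_pgcl :: "cmp \<Rightarrow> transformer \<Rightarrow> pgcl \<Rightarrow> expect \<Rightarrow> pgcl" where
  "transp_pgcl B T Skip f = Skip"
| "transp_pgcl B T (Assign x E) f = Assign x E"
| "transp_pgcl B T (Seq C1 C2) f = Seq (transp_pgcl B T C1 (tstar T C2 f)) (transp_pgcl B T C2 f)"
| "transp_pgcl B T (GChoice \<phi>1 C1 \<phi>2 C2) f =
     GChoice (\<lambda>\<sigma>. \<phi>1 \<sigma> \<and> (\<phi>2 \<sigma> \<longrightarrow> cmp_pred B (tstar T C1 f) (tstar T C2 f) \<sigma>))
             (transp_pgcl B T C1 f)
             (\<lambda>\<sigma>. \<phi>2 \<sigma> \<and> (\<phi>1 \<sigma> \<longrightarrow> cmp_pred B (tstar T C2 f) (tstar T C1 f) \<sigma>))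
             (transp_pgcl B T C2 f)"
| "transp_pgcl B T (PChoice C1 p C2) f = PChoice (transp_pgcl B T C1 f) p (transp_pgcl B T C2 f)"
| "transp_pgcl B T (While \<phi> C I) f = While \<phi> (transp_pgcl B T C I) I"

text \<open>impl C' C means C' \<multimap> C: the smallest reflexive (on pGCL) and transitive relation
  closed under the congruence rules.\<close>
inductive impl :: "pgcl \<Rightarrow> pgcl \<Rightarrow> bool" where
  impl_refl: "wf_pgcl C \<Longrightarrow> impl C C"
| impl_trans: "impl C1 C2 \<Longrightarrow> impl C2 C3 \<Longrightarrow> impl C1 C3"
| impl_seq: "impl C1' C1 \<Longrightarrow> impl C2' C2 \<Longrightarrow> impl (Seq C1' C2') (Seq C1 C2)"
| impl_pchoice: "impl C1' C1 \<Longrightarrow> impl C2' C2 \<Longrightarrow> impl (PChoice C1' p C2') (PChoice C1 p C2)"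
| impl_gchoice: "impl C1' C1 \<Longrightarrow> impl C2' C2 \<Longrightarrow> entails \<phi>1' \<phi>1 \<Longrightarrow> entails \<phi>2' \<phi>2 \<Longrightarrow>
     valid (\<lambda>\<sigma>. \<phi>1' \<sigma> \<or> \<phi>2' \<sigma>) \<Longrightarrow>
     impl (GChoice \<phi>1' C1' \<phi>2' C2') (GChoice \<phi>1 C1 \<phi>2 C2)"
| impl_while: "impl C' C \<Longrightarrow> impl (While \<phi> C' I) (While \<phi> C I)"

end

theory Submission
  imports Defs
begin

text \<open>The transformation only strengthens the guards of guarded choices, so the claim follows by
  structural induction from the congruence rules of the implementation relation. The one point
  to check is that the strengthened guards still cover all states: where both original guards
  hold, the comparison between the two branches is total, so one of them survives.\<close>

lemma cmp_pred_total: "cmp_pred B f g \<sigma> \<or> cmp_pred B g f \<sigma>"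
  by (cases B) auto

lemma impl_gchoice_restrict_overlap:
  assumes "impl C1' C1" and "impl C2' C2"
    and "valid (\<lambda>\<sigma>. \<phi>1 \<sigma> \<or> \<phi>2 \<sigma>)"
    and "\<And>\<sigma>. P \<sigma> \<or> Q \<sigma>"
  shows "impl (GChoice (\<lambda>\<sigma>. \<phi>1 \<sigma> \<and> (\<phi>2 \<sigma> \<longrightarrow> P \<sigma>)) C1' (\<lambda>\<sigma>. \<phi>2 \<sigma> \<and> (\<phi>1 \<sigma> \<longrightarrow> Q \<sigma>)) C2')
              (GChoice \<phi>1 C1 \<phi>2 C2)"
proof (rule impl_gchoice)
  show "valid (\<lambda>\<sigma>. (\<phi>1 \<sigma> \<and> (\<phi>2 \<sigma> \<longrightarrow> P \<sigma>)) \<or> (\<phi>2 \<sigma> \<and> (\<phi>1 \<sigma> \<longrightarrow> Q \<sigma>)))"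
    using assms(3,4) unfolding valid_def by blast
qed (use assms(1,2) in \<open>auto simp: entails_def\<close>)

theorem theorem6p2:
  fixes B :: cmp and T :: transformer and C :: pgcl and f :: expect
  assumes "wf_pgcl C"
  shows "impl (transp_pgcl B T C f) C"
  using assms
proof (induction C arbitrary: f)
  case (GChoice \<phi>1 C1 \<phi>2 C2)
  then show ?case
    by (auto intro!: impl_gchoice_restrict_overlap cmp_pred_total)
qed (auto intro: impl_refl impl_seq impl_pchoice impl_while)

end
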